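(* Let $a>0$ and $T>0$, let $c=\ln 2$, and let $W_0$ denote the principal branch of the Lambert W function. For $\lambda>0$ define $$P(\lambda)=\frac{2}{\lambda c^2}\,W_0\!\left(\frac{\lambda c^2}{2a}\,2^{T}\right)-\frac1a.$$ Then $P(\lambda)$ is strictly decreasing in $\lambda$ on $(0,\infty)$.
   Context: The Lambert W function is the inverse relation of $w\mapsto we^w$; its principal branch $W_0$ is the real-valued branch on $[-1/e,\infty)$ with $W_0\ge -1$, so for $z\ge 0$, $W_0(z)$ is the unique $w\ge 0$ with $we^w=z$. *)

theory Defs
  imports Complex_Main
begin

text \<open>Principal branch of the Lambert W function, on its real domain [-1/e, inf):
  the unique w >= -1 with w * exp w = z. Outside the domain the value is unspecified.\<close>
definition lambertW0 :: "real \<Rightarrow> real" where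
  "lambertW0 z = (THE w. w \<ge> -1 \<and> w * exp w = z)"

end

theory Submission
  imports Defs
begin

text \<open>Writing \<open>k = c\<^sup>2 2\<^sup>T / (2a)\<close>, we have \<open>P(\<lambda>) = (2\<^sup>T/a) W\<^sub>0(\<lambda>k)/(\<lambda>k) - 1/a\<close>, and
  \<open>W\<^sub>0(z)/z = exp(-W\<^sub>0(z))\<close> decreases because \<open>W\<^sub>0\<close> increases, being the inverse of the
  increasing map \<open>w \<mapsto> w e\<^sup>w\<close> on \<open>[-1,\<infinity>)\<close>.\<close>

lemma strict_mono_on_mult_exp: "strict_mono_on {-1..} (\<lambda>x::real. x * exp x)"
proof (rule strict_mono_onI)
  fix u v :: real
  assume "u \<in> {-1..}" "u < v"
  show "u * exp u < v * exp v"
  proof (rule DERIV_pos_imp_increasing_open[OF \<open>u < v\<close>])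
    fix t assume "u < t"
    with \<open>u \<in> {-1..}\<close> have "(1 + t) * exp t > 0" by simp
    moreover have "((\<lambda>x. x * exp x) has_real_derivative (1 + t) * exp t) (at t)"
      by (auto intro!: derivative_eq_intros simp: algebra_simps)
    ultimately show "\<exists>y. ((\<lambda>x. x * exp x) has_real_derivative y) (at t) \<and> 0 < y" by blast
  qed (intro continuous_intros)
qed

lemma lambertW0_eqI:
  assumes "w \<ge> -1" and "w * exp w = z"
  shows "lambertW0 z = w"
  unfolding lambertW0_def
proof (rule the_equality)
  fix v assume "v \<ge> -1 \<and> v * exp v = z"
  with assms show "v = w"
    using strict_mono_on_eqD[OF strict_mono_on_mult_exp, of w v] by auto
qed (use assms in auto)

lemma lambertW0:
  fixes z :: real
  assumes "z \<ge> - exp (-1)"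
  shows "lambertW0 z \<ge> -1" and "lambertW0 z * exp (lambertW0 z) = z"
proof -
  have "z > -1"
    using assms exp_less_one_iff[of "-1"] by linarith
  then have "(z + 1) * 1 \<le> (z + 1) * exp (z + 1)"
    by (intro mult_left_mono) auto
  then have "z \<le> (z + 1) * exp (z + 1)"
    by simp
  then obtain w where "-1 \<le> w" "w * exp w = z"
    using IVT'[of "\<lambda>x. x * exp x" "-1" z "z + 1"] assms \<open>z > -1\<close>
    by (force intro: continuous_intros)
  then show "lambertW0 z \<ge> -1" and "lambertW0 z * exp (lambertW0 z) = z"
    using lambertW0_eqI by auto
qed

lemma strict_mono_on_lambertW0: "strict_mono_on {- exp (-1)..} lambertW0"
proof (rule strict_mono_onI)
  fix z1 z2 :: real
  assume z: "z1 \<in> {- exp (-1)..}" "z2 \<in> {- exp (-1)..}" "z1 < z2"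
  show "lambertW0 z1 < lambertW0 z2"
  proof (rule ccontr)
    assume "\<not> lambertW0 z1 < lambertW0 z2"
    then have "lambertW0 z2 * exp (lambertW0 z2) \<le> lambertW0 z1 * exp (lambertW0 z1)"
      using z lambertW0(1) by (intro strict_mono_on_leD[OF strict_mono_on_mult_exp]) auto
    with z lambertW0(2) show False by auto
  qed
qed

lemma lambertW0_div_self:
  assumes "z \<ge> - exp (-1)" and "z \<noteq> 0"
  shows "lambertW0 z / z = exp (- lambertW0 z)"
proof -
  have z: "z = lambertW0 z * exp (lambertW0 z)"
    using lambertW0(2)[OF assms(1)] by simp
  with assms(2) have "lambertW0 z \<noteq> 0" by auto
  then show ?thesis
    by (subst (2) z) (simp add: exp_minus field_simps)
qed

lemma strict_antimono_on_lambertW0_div_self: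
  "strict_antimono_on ({- exp (-1)..} - {0}) (\<lambda>z. lambertW0 z / z)"
proof (rule monotone_onI)
  fix z1 z2 :: real
  assume z: "z1 \<in> {- exp (-1)..} - {0}" "z2 \<in> {- exp (-1)..} - {0}" "z1 < z2"
  then have "lambertW0 z1 < lambertW0 z2"
    by (intro strict_mono_onD[OF strict_mono_on_lambertW0]) auto
  with z show "lambertW0 z2 / z2 < lambertW0 z1 / z1"
    by (simp add: lambertW0_div_self)
qed

theorem lemma1:
  fixes a T :: real
  assumes "a > 0" and "T > 0"
  defines "P \<equiv> (\<lambda>l::real. 2 / (l * (ln 2)\<^sup>2) * lambertW0 (l * (ln 2)\<^sup>2 / (2 * a) * 2 powr T) - 1 / a)"
  shows "strict_antimono_on {0<..} P"
proof (rule monotone_onI)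
  fix x y :: real
  assume xy: "x \<in> {0<..}" "y \<in> {0<..}" "x < y"
  define k where "k = (ln 2)\<^sup>2 / (2 * a) * 2 powr T"
  have "k > 0"
    unfolding k_def using assms by simp
  have P_eq: "P l = 2 powr T / a * (lambertW0 (l * k) / (l * k)) - 1 / a" if "l > 0" for l
    unfolding P_def k_def using that assms by (simp add: field_simps)
  have "x * k > 0" "y * k > 0"
    using xy \<open>k > 0\<close> by auto
  then have "x * k \<in> {- exp (-1)..} - {0}" "y * k \<in> {- exp (-1)..} - {0}"
    using exp_gt_zero[of "-1"] by (auto simp del: exp_gt_zero)
  with xy \<open>k > 0\<close> have "lambertW0 (y * k) / (y * k) < lambertW0 (x * k) / (x * k)"
    by (intro monotone_onD[OF strict_antimono_on_lambertW0_div_self]) auto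
  then have "2 powr T / a * (lambertW0 (y * k) / (y * k)) < 2 powr T / a * (lambertW0 (x * k) / (x * k))"
    using \<open>a > 0\<close> by (intro mult_strict_left_mono) auto
  with xy show "P y < P x"
    using P_eq[of x] P_eq[of y] by simp
qed

end
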